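(* Let $X$ be a topological space in which every open set is a union of countably many clopen sets. Then $C_p(X)$ is an $\alpha_1$ space if, and only if, for every Borel function $\Psi:X\to\mathbb{N}^{\mathbb{N}}$ the image $\Psi[X]$ is bounded.
   Context: $C_p(X)$ is the set of continuous real-valued functions on $X$ with the topology of pointwise convergence (subspace of $\mathbb{R}^X$). In a topological space $Y$, a countable set $A$ of distinct points converges to $y$ if some (equivalently every) bijective enumeration of $A$ converges to $y$. $Y$ is an $\alpha_1$ space if for each $y\in Y$ and each sequence $A_1,A_2,\dots$ of countably infinite sets each converging to $y$, there are cofinite subsets $B_n\subseteq A_n$ such that $\bigcup_n B_n$ converges to $y$. A function $\Psi:X\to\mathbb{N}^{\mathbb{N}}$ is Borel if preimages of open sets are Borel in $X$. A set $Y\subseteq\mathbb{N}^{\mathbb{N}}$ is bounded if there is $g\in\mathbb{N}^{\mathbb{N}}$ such that for each $f\in Y$, $f(n)\le g(n)$ for all but finitely many $n$. *)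

theory Defs
  imports "HOL-Analysis.Analysis"
begin

definition Cp :: "'a topology \<Rightarrow> ('a \<Rightarrow> real) topology" where
  "Cp X = subtopology (product_topology (\<lambda>_. euclideanreal) (topspace X))
                      {f. continuous_map X euclideanreal f}"

text \<open>A countable set A of distinct points converges to y: some bijective enumeration of A
  converges to y.\<close>
definition set_converges :: "'b topology \<Rightarrow> 'b set \<Rightarrow> 'b \<Rightarrow> bool" where
  "set_converges Y A y \<longleftrightarrow> (\<exists>e::nat \<Rightarrow> 'b. bij_betw e UNIV A \<and> limitin Y e y sequentially)"

definition alpha1_space :: "'b topology \<Rightarrow> bool" where
  "alpha1_space Y \<longleftrightarrow>
    (\<forall>y\<in>topspace Y. \<forall>A::nat \<Rightarrow> 'b set.
       (\<forall>n. A n \<subseteq> topspace Y \<and> countable (A n) \<and> infinite (A n) \<and> set_converges Y (A n) y)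
       \<longrightarrow> (\<exists>B::nat \<Rightarrow> 'b set. (\<forall>n. B n \<subseteq> A n \<and> finite (A n - B n))
                                \<and> set_converges Y (\<Union>n. B n) y))"

definition borel_sets_of :: "'a topology \<Rightarrow> 'a set set" where
  "borel_sets_of X = sigma_sets (topspace X) {U. openin X U}"

text \<open>Borel function into the Baire space (nat \<Rightarrow> nat with the product of discrete topologies).\<close>
definition borel_fun :: "'a topology \<Rightarrow> ('a \<Rightarrow> (nat \<Rightarrow> nat)) \<Rightarrow> bool" where
  "borel_fun X \<Psi> \<longleftrightarrow> (\<forall>U::(nat \<Rightarrow> nat) set. open U \<longrightarrow> {x \<in> topspace X. \<Psi> x \<in> U} \<in> borel_sets_of X)"

definition baire_bounded :: "(nat \<Rightarrow> nat) set \<Rightarrow> bool" where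
  "baire_bounded Y \<longleftrightarrow> (\<exists>g::nat \<Rightarrow> nat. \<forall>f\<in>Y. \<forall>\<^sub>F n in sequentially. f n \<le> g n)"

end

theory Submission
  imports Defs
begin

text \<open>
  Both directions pass through the property \<open>lsc_dominated\<close>: every sequence
  \<open>\<psi> n\<close> of lower semicontinuous \<open>\<nat>\<close>-valued functions on \<open>X\<close> is pointwise eventually
  dominated by a single \<open>g \<in> \<nat>\<^sup>\<nat>\<close>.

  \<^item> Domination implies bounded Borel images.  Call \<open>S\<close> a clopen limit if it is the limit of
    clopen sets \<open>C k\<close> with a lower semicontinuous modulus of convergence.  Under domination
    the clopen limits are closed under countable unions, hence contain all Borel sets; this
    turns the coordinates of a Borel \<open>\<Psi>\<close> into lsc bounds \<open>\<psi> n\<close>, and a dominating \<open>g\<close>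
    bounds \<open>\<Psi>[X]\<close>.
  \<^item> \<open>\<alpha>\<^sub>1\<close> implies domination.  Each \<open>\<psi> n\<close> is witnessed by a point-finite clopen
    sequence \<open>W n\<close>; the functions \<open>indicator (W n k) + c\<^sub>n\<^sub>k\<close> (distinct constants
    \<open>c\<^sub>n\<^sub>k \<rightarrow> 0\<close>) form sets converging to \<open>0\<close>, and \<open>\<alpha>\<^sub>1\<close> yields the dominating \<open>g\<close>.
  \<^item> Bounded Borel images imply \<open>\<alpha>\<^sub>1\<close>.  The convergence moduli of sequences \<open>e n \<rightarrow> y\<close>
    form a Borel map; a bound \<open>g\<close> for it selects the cofinite tails \<open>{e n k | k \<ge> g n}\<close>.

  Convergence of countable sets in \<open>C\<^sub>p(X)\<close> is handled throughout by the criterion: \<open>A\<close>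
  converges to \<open>y\<close> iff at each point \<open>x\<close> only finitely many \<open>h \<in> A\<close> are \<open>\<epsilon>\<close>-far from \<open>y x\<close>.
\<close>

section \<open>Clopen sets and lower semicontinuous integer-valued functions\<close>

definition clopen :: "'a topology \<Rightarrow> 'a set \<Rightarrow> bool" where
  "clopen X C \<longleftrightarrow> closedin X C \<and> openin X C"

lemma clopen_empty: "clopen X {}"
  by (simp add: clopen_def)

lemma clopen_Un: "clopen X A \<Longrightarrow> clopen X B \<Longrightarrow> clopen X (A \<union> B)"
  by (simp add: clopen_def closedin_Un openin_Un)

lemma clopen_Diff: "clopen X A \<Longrightarrow> clopen X B \<Longrightarrow> clopen X (A - B)"
  by (simp add: clopen_def closedin_diff openin_diff)

lemma clopen_complement: "clopen X A \<Longrightarrow> clopen X (topspace X - A)"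
  by (simp add: clopen_def closedin_diff openin_diff)

lemma clopen_UN_finite:
  "finite I \<Longrightarrow> (\<And>i. i \<in> I \<Longrightarrow> clopen X (C i)) \<Longrightarrow> clopen X (\<Union>i\<in>I. C i)"
  unfolding clopen_def by (intro conjI closedin_Union openin_Union) auto

lemma clopen_disjointed: "(\<And>i. clopen X (C i)) \<Longrightarrow> clopen X (disjointed C n)"
  unfolding disjointed_def by (intro clopen_Diff clopen_UN_finite) auto

lemma disjoint_family_point_finite:
  assumes "disjoint_family A"
  shows "finite {n. x \<in> A n}"
proof (cases "\<exists>n. x \<in> A n")
  case True
  then obtain n where "x \<in> A n" by blast
  with assms have "{n. x \<in> A n} \<subseteq> {n}" by (auto simp: disjoint_family_on_def)
  then show ?thesis by (rule finite_subset) simp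
qed simp

definition lsc_nat :: "'a topology \<Rightarrow> ('a \<Rightarrow> nat) \<Rightarrow> bool" where
  "lsc_nat X f \<longleftrightarrow> (\<forall>m. openin X {x \<in> topspace X. m < f x})"

lemma lsc_nat_const: "lsc_nat X (\<lambda>x. c)"
  unfolding lsc_nat_def
proof
  fix m show "openin X {x \<in> topspace X. m < c}" by (cases "m < c") auto
qed

lemma lsc_nat_max: "lsc_nat X f \<Longrightarrow> lsc_nat X g \<Longrightarrow> lsc_nat X (\<lambda>x. max (f x) (g x))"
  unfolding lsc_nat_def
proof (intro allI)
  fix m assume "\<forall>m. openin X {x \<in> topspace X. m < f x}" "\<forall>m. openin X {x \<in> topspace X. m < g x}"
  then have "openin X ({x \<in> topspace X. m < f x} \<union> {x \<in> topspace X. m < g x})" by blast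
  moreover have "{x \<in> topspace X. m < max (f x) (g x)} =
                 {x \<in> topspace X. m < f x} \<union> {x \<in> topspace X. m < g x}" by auto
  ultimately show "openin X {x \<in> topspace X. m < max (f x) (g x)}" by simp
qed

lemma lsc_nat_Max:
  assumes "\<And>i. lsc_nat X (l i)"
  shows "lsc_nat X (\<lambda>x. MAX i\<in>{..(n::nat)}. l i x)"
  unfolding lsc_nat_def
proof
  fix m
  have "{x \<in> topspace X. m < (MAX i\<in>{..n}. l i x)} = (\<Union>i\<in>{..n}. {x \<in> topspace X. m < l i x})"
    by (auto simp: Max_gr_iff)
  then show "openin X {x \<in> topspace X. m < (MAX i\<in>{..n}. l i x)}"
    using assms unfolding lsc_nat_def by (auto intro!: openin_Union)
qed

lemma point_finite_exit_lsc:
  assumes open_Op: "\<And>m. openin X (Op m)"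
    and point_finite: "\<And>x. x \<in> topspace X \<Longrightarrow> finite {m. x \<in> Op m}"
  obtains r where "lsc_nat X r" and "\<And>x m. x \<in> topspace X \<Longrightarrow> x \<in> Op m \<Longrightarrow> m < r x"
proof
  define r where "r x = (LEAST r. \<forall>m\<ge>r. x \<notin> Op m)" for x
  have exit: "\<forall>m\<ge>r x. x \<notin> Op m" if x: "x \<in> topspace X" for x
  proof -
    obtain b where "\<forall>m\<in>{m. x \<in> Op m}. m < b"
      using point_finite[OF x] finite_nat_set_iff_bounded by blast
    then have "\<exists>r. \<forall>m\<ge>r. x \<notin> Op m" by (metis mem_Collect_eq not_le)
    then show ?thesis unfolding r_def by (rule LeastI_ex)
  qed
  have below_exit: "m < r x \<longleftrightarrow> (\<exists>j\<ge>m. x \<in> Op j)" if "x \<in> topspace X" for x m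
  proof
    assume "m < r x"
    show "\<exists>j\<ge>m. x \<in> Op j"
    proof (rule ccontr)
      assume "\<not> (\<exists>j\<ge>m. x \<in> Op j)"
      then have "r x \<le> m" unfolding r_def by (intro Least_le) blast
      with \<open>m < r x\<close> show False by simp
    qed
  next
    assume "\<exists>j\<ge>m. x \<in> Op j"
    then obtain j where "m \<le> j" "x \<in> Op j" by blast
    with exit[OF that] show "m < r x" by (meson le_less_trans not_le)
  qed
  show "lsc_nat X r"
    unfolding lsc_nat_def
  proof
    fix m
    have "{x \<in> topspace X. m < r x} = (\<Union>j\<in>{m..}. topspace X \<inter> Op j)"
      using below_exit by blast
    moreover have "openin X (\<Union>j\<in>{m..}. topspace X \<inter> Op j)"
      using open_Op by (auto intro!: openin_Union openin_Int)
    ultimately show "openin X {x \<in> topspace X. m < r x}" by simp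
  qed
  show "m < r x" if "x \<in> topspace X" "x \<in> Op m" for x m
    using below_exit that by blast
qed

definition lsc_dominated :: "'a topology \<Rightarrow> bool" where
  "lsc_dominated X \<longleftrightarrow> (\<forall>\<psi>::nat \<Rightarrow> 'a \<Rightarrow> nat. (\<forall>n. lsc_nat X (\<psi> n)) \<longrightarrow>
      (\<exists>g. \<forall>x\<in>topspace X. \<forall>\<^sub>F n in sequentially. \<psi> n x \<le> g n))"

lemma lsc_dominatedD:
  assumes "lsc_dominated X" "\<And>n. lsc_nat X (\<psi> n)"
  obtains g where "\<And>x. x \<in> topspace X \<Longrightarrow> \<forall>\<^sub>F n in sequentially. \<psi> n x \<le> g n"
  using assms unfolding lsc_dominated_def by blast

section \<open>Clopen limits\<close>

text \<open>Under \<open>lsc_dominated\<close> these sets will turn out to form a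
  \<sigma>-algebra containing the open sets.\<close>

definition clopen_limit :: "'a topology \<Rightarrow> 'a set \<Rightarrow> bool" where
  "clopen_limit X S \<longleftrightarrow> S \<subseteq> topspace X \<and> (\<exists>C l. (\<forall>k. clopen X (C k)) \<and> lsc_nat X l \<and>
      (\<forall>x\<in>topspace X. \<forall>k. l x \<le> k \<longrightarrow> (x \<in> C k \<longleftrightarrow> x \<in> S)))"

lemma clopen_limit_clopen: "clopen X C \<Longrightarrow> clopen_limit X C"
  unfolding clopen_limit_def
  by (intro conjI exI[of _ "\<lambda>k. C"] exI[of _ "\<lambda>x. 0"])
     (auto simp: clopen_def openin_subset lsc_nat_const)

lemma clopen_limit_complement:
  assumes "clopen_limit X S"
  shows "clopen_limit X (topspace X - S)"
proof -
  obtain C l where "\<forall>k. clopen X (C k)" "lsc_nat X l"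
     "\<forall>x\<in>topspace X. \<forall>k. l x \<le> k \<longrightarrow> (x \<in> C k \<longleftrightarrow> x \<in> S)"
    using assms unfolding clopen_limit_def by blast
  then show ?thesis
    unfolding clopen_limit_def
    by (intro conjI exI[of _ "\<lambda>k. topspace X - C k"] exI[of _ l])
       (auto simp: clopen_complement)
qed

lemma clopen_limit_Un:
  assumes "clopen_limit X S" "clopen_limit X S'"
  shows "clopen_limit X (S \<union> S')"
proof -
  obtain C l where C: "\<forall>k. clopen X (C k)" "lsc_nat X l"
     "\<forall>x\<in>topspace X. \<forall>k. l x \<le> k \<longrightarrow> (x \<in> C k \<longleftrightarrow> x \<in> S)"
    using assms(1) unfolding clopen_limit_def by blast
  obtain C' l' where C': "\<forall>k. clopen X (C' k)" "lsc_nat X l'"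
     "\<forall>x\<in>topspace X. \<forall>k. l' x \<le> k \<longrightarrow> (x \<in> C' k \<longleftrightarrow> x \<in> S')"
    using assms(2) unfolding clopen_limit_def by blast
  have "S \<union> S' \<subseteq> topspace X" using assms unfolding clopen_limit_def by blast
  with C C' show ?thesis
    unfolding clopen_limit_def
    by (intro conjI exI[of _ "\<lambda>k. C k \<union> C' k"] exI[of _ "\<lambda>x. max (l x) (l' x)"])
       (auto simp: clopen_Un lsc_nat_max)
qed

lemma clopen_limit_Diff:
  assumes "clopen_limit X S" "clopen_limit X S'"
  shows "clopen_limit X (S - S')"
proof -
  have "S - S' = topspace X - ((topspace X - S) \<union> S')"
    using assms(1) unfolding clopen_limit_def by auto
  then show ?thesis using assms by (simp add: clopen_limit_complement clopen_limit_Un)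
qed

lemma clopen_limit_UN_finite:
  assumes "finite I" "\<And>i. i \<in> I \<Longrightarrow> clopen_limit X (S i)"
  shows "clopen_limit X (\<Union>i\<in>I. S i)"
  using assms
proof (induction I rule: finite_induct)
  case empty
  then show ?case using clopen_limit_clopen[OF clopen_empty] by simp
next
  case (insert i I)
  then show ?case by (simp add: clopen_limit_Un)
qed

lemma clopen_limit_choice:
  assumes "\<And>m. clopen_limit X (S m)"
  obtains C l where "\<And>m k. clopen X (C m k)" "\<And>m. lsc_nat X (l m)"
    "\<And>m x k. x \<in> topspace X \<Longrightarrow> l m x \<le> k \<Longrightarrow> x \<in> C m k \<longleftrightarrow> x \<in> S m"
proof -
  have "\<forall>m. \<exists>C l. (\<forall>k. clopen X (C k)) \<and> lsc_nat X l \<and>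
      (\<forall>x\<in>topspace X. \<forall>k. l x \<le> k \<longrightarrow> (x \<in> C k \<longleftrightarrow> x \<in> S m))"
    using assms unfolding clopen_limit_def by blast
  from choice[OF this] obtain C where "\<forall>m. \<exists>l. (\<forall>k. clopen X (C m k)) \<and> lsc_nat X l \<and>
      (\<forall>x\<in>topspace X. \<forall>k. l x \<le> k \<longrightarrow> (x \<in> C m k \<longleftrightarrow> x \<in> S m))"
    by blast
  from choice[OF this] obtain l where "\<forall>m. (\<forall>k. clopen X (C m k)) \<and> lsc_nat X (l m) \<and>
      (\<forall>x\<in>topspace X. \<forall>k. l m x \<le> k \<longrightarrow> (x \<in> C m k \<longleftrightarrow> x \<in> S m))"
    by blast
  then show ?thesis by (intro that[of C l]) blast+
qed

text \<open>Under domination, a point-finite sequence of clopen limits can be enlarged to a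
  point-finite sequence of open sets: use the approximant \<open>C m (g m)\<close> and add the open set
  where the modulus \<open>l m\<close> is still above \<open>g m\<close>.\<close>

lemma clopen_limits_point_finite_open_cover:
  fixes T :: "nat \<Rightarrow> 'a set"
  assumes dom: "lsc_dominated X" and T: "\<And>m. clopen_limit X (T m)"
    and point_finite: "\<And>x. x \<in> topspace X \<Longrightarrow> finite {m. x \<in> T m}"
  obtains V where "\<And>m. openin X (V m)" "\<And>m. T m \<subseteq> V m"
    "\<And>x. x \<in> topspace X \<Longrightarrow> finite {m. x \<in> V m}"
proof -
  obtain C l where C: "\<And>m k. clopen X (C m k)" and l: "\<And>m. lsc_nat X (l m)"
    and agree: "\<And>m x k. x \<in> topspace X \<Longrightarrow> l m x \<le> k \<Longrightarrow> x \<in> C m k \<longleftrightarrow> x \<in> T m"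
    using clopen_limit_choice[where S=T, OF T] by metis
  obtain g where g: "\<And>x. x \<in> topspace X \<Longrightarrow> \<forall>\<^sub>F n in sequentially. l n x \<le> g n"
    using lsc_dominatedD[where \<psi>=l, OF dom l] by metis
  define V where "V m = C m (g m) \<union> {x \<in> topspace X. g m < l m x}" for m
  have "openin X (V m)" for m
    unfolding V_def using C[of m "g m"] l[of m] unfolding clopen_def lsc_nat_def
    by (intro openin_Un) auto
  moreover have "T m \<subseteq> V m" for m
  proof
    fix x assume "x \<in> T m"
    moreover then have "x \<in> topspace X" using T[of m] unfolding clopen_limit_def by blast
    ultimately show "x \<in> V m"
      unfolding V_def using agree[of x m "g m"] by (cases "l m x \<le> g m") auto
  qed
  moreover have "finite {m. x \<in> V m}" if x: "x \<in> topspace X" for x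
  proof -
    obtain N where N: "\<forall>n\<ge>N. l n x \<le> g n" using g[OF x] unfolding eventually_sequentially by blast
    have "{m. x \<in> V m} \<subseteq> {m. x \<in> T m} \<union> {..<N}"
      using N agree[OF x] unfolding V_def by (force simp: not_less)
    then show ?thesis using point_finite[OF x] by (meson finite_Un finite_lessThan finite_subset)
  qed
  ultimately show ?thesis using that by blast
qed

lemma clopen_limits_point_finite_lsc_bound:
  fixes T :: "nat \<Rightarrow> 'a set"
  assumes "lsc_dominated X" "\<And>m. clopen_limit X (T m)"
    and "\<And>x. x \<in> topspace X \<Longrightarrow> finite {m. x \<in> T m}"
  obtains \<rho> where "lsc_nat X \<rho>" "\<And>x m. x \<in> topspace X \<Longrightarrow> x \<in> T m \<Longrightarrow> m < \<rho> x"
proof -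
  obtain V where V: "\<And>m. openin X (V m)" "\<And>m. T m \<subseteq> V m"
    "\<And>x. x \<in> topspace X \<Longrightarrow> finite {m. x \<in> V m}"
    using clopen_limits_point_finite_open_cover[OF assms] by blast
  obtain \<rho> where "lsc_nat X \<rho>" "\<And>x m. x \<in> topspace X \<Longrightarrow> x \<in> V m \<Longrightarrow> m < \<rho> x"
    using point_finite_exit_lsc[of X V, OF V(1,3)] by blast
  then show ?thesis using that V(2) by blast
qed

lemma lsc_dominated_common_modulus:
  assumes dom: "lsc_dominated X" and l: "\<And>i. lsc_nat X (l i)"
  obtains g N where "lsc_nat X N"
    "\<And>x k i. x \<in> topspace X \<Longrightarrow> N x \<le> k \<Longrightarrow> i \<le> k \<Longrightarrow> l i x \<le> g k"
proof -
  define \<theta> where "\<theta> n x = (MAX i\<in>{..(n::nat)}. l i x)" for n x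
  have \<theta>_lsc: "lsc_nat X (\<theta> n)" for n
    unfolding \<theta>_def using lsc_nat_Max[OF l] .
  have l_le_\<theta>: "l i x \<le> \<theta> n x" if "i \<le> n" for i n x
    unfolding \<theta>_def using that by (intro Max_ge) auto
  obtain g where g: "\<And>x. x \<in> topspace X \<Longrightarrow> \<forall>\<^sub>F n in sequentially. \<theta> n x \<le> g n"
    using lsc_dominatedD[where \<psi>=\<theta>, OF dom \<theta>_lsc] by metis
  define Op where "Op n = {x \<in> topspace X. g n < \<theta> n x}" for n
  have "openin X (Op n)" for n using \<theta>_lsc[of n] unfolding lsc_nat_def Op_def by blast
  moreover have "finite {n. x \<in> Op n}" if x: "x \<in> topspace X" for x
  proof -
    obtain M where "\<forall>n\<ge>M. \<theta> n x \<le> g n" using g[OF x] unfolding eventually_sequentially by blast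
    then have "{n. x \<in> Op n} \<subseteq> {..<M}" unfolding Op_def by (auto simp: not_le[symmetric])
    then show ?thesis using finite_subset by blast
  qed
  ultimately obtain N where N: "lsc_nat X N" and exit: "\<And>x n. x \<in> topspace X \<Longrightarrow> x \<in> Op n \<Longrightarrow> n < N x"
    using point_finite_exit_lsc[of X Op] by blast
  have "l i x \<le> g k" if "x \<in> topspace X" "N x \<le> k" "i \<le> k" for x k i
  proof -
    have "x \<notin> Op k" using exit[of x k] that by linarith
    then have "\<theta> k x \<le> g k" using that(1) unfolding Op_def by simp
    then show ?thesis using l_le_\<theta>[OF that(3), of x] by linarith
  qed
  with N show ?thesis using that by blast
qed

text \<open>The approximants are \<open>D k = \<Union>n\<le>k. C n (g k)\<close>; they agree with the union at \<open>x\<close> as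
  soon as \<open>k\<close> exceeds both the common modulus and the index of the first set containing \<open>x\<close>.\<close>

lemma clopen_limit_UN:
  fixes S :: "nat \<Rightarrow> 'a set"
  assumes dom: "lsc_dominated X" and S: "\<And>n. clopen_limit X (S n)"
  shows "clopen_limit X (\<Union>n. S n)"
proof -
  obtain C l where C: "\<And>m k. clopen X (C m k)" and l: "\<And>m. lsc_nat X (l m)"
    and agree: "\<And>m x k. x \<in> topspace X \<Longrightarrow> l m x \<le> k \<Longrightarrow> x \<in> C m k \<longleftrightarrow> x \<in> S m"
    using clopen_limit_choice[where S=S, OF S] by metis
  obtain g N where N: "lsc_nat X N"
    and modulus: "\<And>x k i. x \<in> topspace X \<Longrightarrow> N x \<le> k \<Longrightarrow> i \<le> k \<Longrightarrow> l i x \<le> g k"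
    using lsc_dominated_common_modulus[where l=l, OF dom l] by metis
  have "clopen_limit X (disjointed S n)" for n
    unfolding disjointed_def using S by (intro clopen_limit_Diff clopen_limit_UN_finite) auto
  moreover have "finite {n. x \<in> disjointed S n}" for x
    by (rule disjoint_family_point_finite[OF disjoint_family_disjointed])
  ultimately obtain \<rho> where \<rho>: "lsc_nat X \<rho>"
    and first: "\<And>x n. x \<in> topspace X \<Longrightarrow> x \<in> disjointed S n \<Longrightarrow> n < \<rho> x"
    using clopen_limits_point_finite_lsc_bound[OF dom] by blast
  define D where "D k = (\<Union>n\<in>{..k}. C n (g k))" for k
  have "clopen X (D k)" for k unfolding D_def using C by (intro clopen_UN_finite) auto
  moreover have "lsc_nat X (\<lambda>x. max (N x) (\<rho> x))" using lsc_nat_max[OF N \<rho>] .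
  moreover have "x \<in> D k \<longleftrightarrow> x \<in> (\<Union>n. S n)"
    if x: "x \<in> topspace X" and k: "max (N x) (\<rho> x) \<le> k" for x k
  proof -
    have agree_k: "x \<in> C n (g k) \<longleftrightarrow> x \<in> S n" if "n \<le> k" for n
      using agree[OF x modulus[OF x _ that]] k by simp
    show ?thesis
    proof
      assume "x \<in> D k"
      then obtain n where "n \<le> k" "x \<in> C n (g k)" unfolding D_def by blast
      then show "x \<in> (\<Union>n. S n)" using agree_k by blast
    next
      assume "x \<in> (\<Union>n. S n)"
      then obtain n where n: "x \<in> disjointed S n" using UN_disjointed_eq[of S] by blast
      have "n < \<rho> x" by (rule first[OF x n])
      then have "n \<le> k" using k by simp
      moreover have "x \<in> S n" using n disjointed_subset[of S n] by blast
      ultimately show "x \<in> D k" unfolding D_def using agree_k by blast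
    qed
  qed
  moreover have "(\<Union>n. S n) \<subseteq> topspace X" using S unfolding clopen_limit_def by blast
  ultimately show ?thesis unfolding clopen_limit_def by blast
qed

section \<open>Domination bounds Borel images\<close>

definition countable_clopen_unions :: "'a topology \<Rightarrow> bool" where
  "countable_clopen_unions X \<longleftrightarrow> (\<forall>U. openin X U \<longrightarrow>
     (\<exists>\<C>. countable \<C> \<and> (\<forall>C\<in>\<C>. closedin X C \<and> openin X C) \<and> \<Union>\<C> = U))"

text \<open>Under this hypothesis an open set is even the union of a disjoint sequence of clopen
  sets (pad the countable family with \<open>{}\<close>, enumerate it, and disjointify).\<close>

lemma open_disjoint_clopen_sequence:
  assumes "countable_clopen_unions X" "openin X U"
  obtains K :: "nat \<Rightarrow> 'a set"
  where "\<And>j. clopen X (K j)" "disjoint_family K" "(\<Union>j. K j) = U"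
proof -
  obtain \<C> where \<C>: "countable \<C>" "\<forall>C\<in>\<C>. clopen X C" "\<Union>\<C> = U"
    using assms unfolding countable_clopen_unions_def clopen_def by blast
  define E where "E = from_nat_into (insert {} \<C>)"
  have E_clopen: "clopen X (E j)" for j
    using from_nat_into[of "insert {} \<C>" j] \<C>(2) clopen_empty[of X] unfolding E_def by auto
  have "range E = insert {} \<C>"
    unfolding E_def using \<C>(1) by (intro range_from_nat_into) auto
  then have "(\<Union>j. E j) = U" using \<C>(3) by simp
  show ?thesis
  proof
    show "clopen X (disjointed E j)" for j using clopen_disjointed[of X E] E_clopen by blast
    show "disjoint_family (disjointed E)" by (rule disjoint_family_disjointed)
    show "(\<Union>j. disjointed E j) = U" using \<open>(\<Union>j. E j) = U\<close> by (simp add: UN_disjointed_eq)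
  qed
qed

lemma clopen_limit_open:
  assumes "lsc_dominated X" "countable_clopen_unions X" "openin X U"
  shows "clopen_limit X U"
proof -
  obtain K :: "nat \<Rightarrow> 'a set" where "\<And>j. clopen X (K j)" "(\<Union>j. K j) = U"
    using open_disjoint_clopen_sequence[OF assms(2,3)] by metis
  then show ?thesis using clopen_limit_UN[where S=K, OF assms(1)] clopen_limit_clopen by metis
qed

lemma clopen_limit_borel:
  assumes dom: "lsc_dominated X" and clopen_unions: "countable_clopen_unions X"
    and S: "S \<in> borel_sets_of X"
  shows "clopen_limit X S"
  using S unfolding borel_sets_of_def
proof induction
  case (Basic U)
  then show ?case using clopen_limit_open[OF dom clopen_unions] by blast
next
  case Empty
  then show ?case by (rule clopen_limit_clopen[OF clopen_empty])
next
  case (Compl S)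
  then show ?case by (simp add: clopen_limit_complement)
next
  case (Union S)
  then show ?case using clopen_limit_UN[where S=S, OF dom] by blast
qed

lemma open_coordinate_gt: "open {f :: nat \<Rightarrow> nat. m < f n}"
proof -
  have "open {f :: nat \<Rightarrow> nat. \<forall>i\<in>{n}. f (id i) \<in> {m<..}}"
    by (rule product_topology_basis') auto
  moreover have "{f :: nat \<Rightarrow> nat. \<forall>i\<in>{n}. f (id i) \<in> {m<..}} = {f. m < f n}" by auto
  ultimately show ?thesis by metis
qed

text \<open>The implication ``domination \<open>\<Rightarrow>\<close> bounded Borel images'': the sets \<open>{\<Psi>(x)(n) > m}\<close>
  are clopen limits, point-finite in \<open>m\<close>, so \<open>\<Psi>(\<cdot>)(n)\<close> is bounded by a lower
  semicontinuous \<open>\<psi> n\<close>; a function dominating all \<open>\<psi> n\<close> bounds \<open>\<Psi>[X]\<close>.\<close>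

lemma lsc_dominated_borel_bounded:
  assumes dom: "lsc_dominated X" and clopen_unions: "countable_clopen_unions X"
    and \<Psi>: "borel_fun X \<Psi>"
  shows "baire_bounded (\<Psi> ` topspace X)"
proof -
  define T where "T n m = {x \<in> topspace X. m < \<Psi> x n}" for n m
  have "T n m \<in> borel_sets_of X" for n m
    using \<Psi>[unfolded borel_fun_def, rule_format, OF open_coordinate_gt[of m n]]
    by (simp add: T_def)
  then have T_clopen_limit: "clopen_limit X (T n m)" for n m
    using clopen_limit_borel[OF dom clopen_unions] by blast
  have "finite {m. x \<in> T n m}" for n x
    by (rule finite_subset[of _ "{..<\<Psi> x n}"]) (auto simp: T_def)
  then have "\<forall>n. \<exists>\<rho>. lsc_nat X \<rho> \<and> (\<forall>x m. x \<in> topspace X \<longrightarrow> x \<in> T n m \<longrightarrow> m < \<rho> x)"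
    using clopen_limits_point_finite_lsc_bound[where T="T n" for n, OF dom T_clopen_limit]
    by metis
  then obtain \<psi> where \<psi>: "\<And>n. lsc_nat X (\<psi> n)"
    and bound: "\<And>n x m. x \<in> topspace X \<Longrightarrow> x \<in> T n m \<Longrightarrow> m < \<psi> n x"
    by metis
  have \<Psi>_le: "\<Psi> x n \<le> \<psi> n x" if x: "x \<in> topspace X" for x n
  proof (cases "\<Psi> x n")
    case (Suc m)
    then have "x \<in> T n m" using x unfolding T_def by simp
    then show ?thesis using bound[OF x] Suc by fastforce
  qed simp
  obtain g where g: "\<And>x. x \<in> topspace X \<Longrightarrow> \<forall>\<^sub>F n in sequentially. \<psi> n x \<le> g n"
    using lsc_dominatedD[where \<psi>=\<psi>, OF dom \<psi>] by metis
  have "\<forall>\<^sub>F n in sequentially. \<Psi> x n \<le> g n" if "x \<in> topspace X" for x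
    using g[OF that] by eventually_elim (use \<Psi>_le[OF that] order_trans in blast)
  then show ?thesis unfolding baire_bounded_def by blast
qed

section \<open>Convergence of countable sets in \<open>C\<^sub>p(X)\<close>\<close>

text \<open>The points of \<open>C\<^sub>p(X)\<close> are the continuous functions, extended by \<open>undefined\<close> off \<open>X\<close>.\<close>

lemma topspace_Cp:
  "topspace (Cp X) = {h \<in> topspace X \<rightarrow>\<^sub>E UNIV. continuous_map X euclideanreal h}"
  unfolding Cp_def by auto

lemma limitin_CpI:
  assumes "\<forall>\<^sub>F k in F. f k \<in> topspace (Cp X)" "y \<in> topspace (Cp X)"
    and "\<And>x. x \<in> topspace X \<Longrightarrow> ((\<lambda>k. f k x) \<longlongrightarrow> y x) F"
  shows "limitin (Cp X) f y F"
proof -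
  have "\<forall>\<^sub>F k in F. continuous_map X euclideanreal (f k) \<and> f k \<in> topspace X \<rightarrow>\<^sub>E UNIV"
    using assms(1) unfolding topspace_Cp by (rule eventually_mono) blast
  moreover have "y \<in> extensional (topspace X)" "continuous_map X euclideanreal y"
    using assms(2) unfolding topspace_Cp by (auto simp: PiE_def)
  ultimately show ?thesis
    unfolding Cp_def limitin_subtopology limitin_componentwise
    using assms(3) by (simp add: eventually_conj_iff)
qed

lemma limitin_Cp_pointwise:
  assumes "limitin (Cp X) f y F" "x \<in> topspace X"
  shows "((\<lambda>k. f k x) \<longlongrightarrow> y x) F"
  using assms unfolding Cp_def limitin_subtopology limitin_componentwise by simp

lemma set_converges_Cp_finite_deviations:
  assumes "set_converges (Cp X) A y" "x \<in> topspace X" "0 < \<epsilon>"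
  shows "finite {h \<in> A. \<epsilon> \<le> \<bar>h x - y x\<bar>}"
proof -
  obtain e where e: "bij_betw e UNIV A" "limitin (Cp X) e y sequentially"
    using assms(1) unfolding set_converges_def by blast
  have "\<forall>\<^sub>F j in sequentially. dist (e j x) (y x) < \<epsilon>"
    using tendstoD[OF limitin_Cp_pointwise[OF e(2) assms(2)] assms(3)] .
  then obtain J where J: "\<And>j. J \<le> j \<Longrightarrow> \<bar>e j x - y x\<bar> < \<epsilon>"
    unfolding eventually_sequentially dist_real_def by blast
  have "{h \<in> A. \<epsilon> \<le> \<bar>h x - y x\<bar>} \<subseteq> e ` {..<J}"
  proof
    fix h assume h: "h \<in> {h \<in> A. \<epsilon> \<le> \<bar>h x - y x\<bar>}"
    then obtain j where "h = e j" using e(1) unfolding bij_betw_def by blast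
    moreover have "j < J" using J[of j] h \<open>h = e j\<close> by force
    ultimately show "h \<in> e ` {..<J}" by blast
  qed
  then show ?thesis by (rule finite_subset) simp
qed

lemma set_converges_CpI:
  assumes A: "A \<subseteq> topspace (Cp X)" "countable A" "infinite A" and y: "y \<in> topspace (Cp X)"
    and finite_dev: "\<And>x \<epsilon>. x \<in> topspace X \<Longrightarrow> 0 < \<epsilon> \<Longrightarrow> finite {h \<in> A. \<epsilon> \<le> \<bar>h x - y x\<bar>}"
  shows "set_converges (Cp X) A y"
proof -
  define e where "e = from_nat_into A"
  have e: "bij_betw e UNIV A" unfolding e_def using A(2,3) by (rule bij_betw_from_nat_into)
  have "limitin (Cp X) e y sequentially"
  proof (rule limitin_CpI)
    have "e j \<in> topspace (Cp X)" for j
      using e A(1) unfolding bij_betw_def by blast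
    then show "\<forall>\<^sub>F j in sequentially. e j \<in> topspace (Cp X)" by simp
    show "y \<in> topspace (Cp X)" by (rule y)
    fix x assume x: "x \<in> topspace X"
    show "(\<lambda>j. e j x) \<longlonglongrightarrow> y x"
    proof (rule tendstoI)
      fix \<epsilon> :: real assume "0 < \<epsilon>"
      have "finite (e -` {h \<in> A. \<epsilon> \<le> \<bar>h x - y x\<bar>})"
        using finite_dev[OF x \<open>0 < \<epsilon>\<close>] e unfolding bij_betw_def by (blast intro: finite_vimageI)
      moreover have "e -` {h \<in> A. \<epsilon> \<le> \<bar>h x - y x\<bar>} = {j. \<not> dist (e j x) (y x) < \<epsilon>}"
        using e unfolding bij_betw_def dist_real_def by auto
      ultimately show "\<forall>\<^sub>F j in sequentially. dist (e j x) (y x) < \<epsilon>"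
        by (simp add: eventually_cofinite cofinite_eq_sequentially[symmetric])
    qed
  qed
  with e show ?thesis unfolding set_converges_def by blast
qed

section \<open>An \<open>\<alpha>\<^sub>1\<close> space \<open>C\<^sub>p(X)\<close> forces domination\<close>

text \<open>Take disjoint clopen decompositions \<open>K m j\<close> of the open sets \<open>{\<psi> > m}\<close> and
  enumerate all of them via the pairing function.\<close>

lemma lsc_point_finite_clopen_witness:
  assumes clopen_unions: "countable_clopen_unions X" and \<psi>: "lsc_nat X \<psi>"
  obtains W :: "nat \<Rightarrow> 'a set" where "\<And>k. clopen X (W k)"
    "\<And>x. x \<in> topspace X \<Longrightarrow> finite {k. x \<in> W k}"
    "\<And>x m. x \<in> topspace X \<Longrightarrow> m < \<psi> x \<Longrightarrow> \<exists>k\<ge>m. x \<in> W k"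
proof -
  have "\<forall>m. \<exists>K :: nat \<Rightarrow> 'a set. (\<forall>j. clopen X (K j)) \<and> disjoint_family K \<and> (\<Union>j. K j) = {x \<in> topspace X. m < \<psi> x}"
  proof
    fix m
    have "openin X {x \<in> topspace X. m < \<psi> x}" using \<psi> unfolding lsc_nat_def by blast
    then obtain K :: "nat \<Rightarrow> 'a set" where "\<And>j. clopen X (K j)" "disjoint_family K"
      "(\<Union>j. K j) = {x \<in> topspace X. m < \<psi> x}"
      using open_disjoint_clopen_sequence[OF clopen_unions, of "{x \<in> topspace X. m < \<psi> x}"]
      by blast
    then show "\<exists>K :: nat \<Rightarrow> 'a set. (\<forall>j. clopen X (K j)) \<and> disjoint_family K \<and>
        (\<Union>j. K j) = {x \<in> topspace X. m < \<psi> x}" by blast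
  qed
  then obtain K :: "nat \<Rightarrow> nat \<Rightarrow> 'a set" where K_clopen: "\<And>m j. clopen X (K m j)" and K_disjoint: "\<And>m. disjoint_family (K m)"
    and K_Union: "\<And>m. (\<Union>j. K m j) = {x \<in> topspace X. m < \<psi> x}"
    by metis
  define W where "W k = K (fst (prod_decode k)) (snd (prod_decode k))" for k
  show ?thesis
  proof
    show "clopen X (W k)" for k unfolding W_def by (rule K_clopen)
  next
    fix x assume x: "x \<in> topspace X"
    have "{k. x \<in> W k} \<subseteq> prod_encode ` (SIGMA m:{..<\<psi> x}. {j. x \<in> K m j})"
    proof
      fix k assume "k \<in> {k. x \<in> W k}"
      moreover obtain m j where mj: "prod_decode k = (m, j)" by fastforce
      ultimately have "x \<in> K m j" unfolding W_def by simp
      then have "m < \<psi> x" using K_Union[of m] by blast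
      with \<open>x \<in> K m j\<close> mj show "k \<in> prod_encode ` (SIGMA m:{..<\<psi> x}. {j. x \<in> K m j})"
        by (metis (no_types, lifting) SigmaI image_eqI lessThan_iff mem_Collect_eq prod_decode_inverse)
    qed
    moreover have "finite (SIGMA m:{..<\<psi> x}. {j. x \<in> K m j})"
      using disjoint_family_point_finite[OF K_disjoint] by blast
    ultimately show "finite {k. x \<in> W k}" by (meson finite_imageI finite_subset)
  next
    fix x m assume "x \<in> topspace X" "m < \<psi> x"
    then obtain j where "x \<in> K m j" using K_Union[of m] by blast
    then have "x \<in> W (prod_encode (m, j))" unfolding W_def by simp
    then show "\<exists>k\<ge>m. x \<in> W k" using le_prod_encode_1 by blast
  qed
qed

definition bump :: "'a topology \<Rightarrow> 'a set \<Rightarrow> real \<Rightarrow> 'a \<Rightarrow> real" where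
  "bump X W c = (\<lambda>x\<in>topspace X. indicator W x + c)"

lemma continuous_map_indicator_clopen:
  assumes "clopen X W"
  shows "continuous_map X euclideanreal (indicator W :: 'a \<Rightarrow> real)"
  unfolding continuous_map_def
proof (intro conjI allI impI)
  show "indicator W \<in> topspace X \<rightarrow> topspace euclideanreal" by simp
  fix U :: "real set"
  have "{x \<in> topspace X. indicator W x \<in> U} =
        (if 1 \<in> U then W else {}) \<union> (if 0 \<in> U then topspace X - W else {})"
    using assms closedin_subset by (auto simp: clopen_def indicator_def)
  moreover have "openin X ((if 1 \<in> U then W else {}) \<union> (if 0 \<in> U then topspace X - W else {}))"
    using assms by (intro openin_Un) (auto simp: clopen_def openin_closedin_eq)
  ultimately show "openin X {x \<in> topspace X. indicator W x \<in> U}" by simp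
qed

lemma bump_in_Cp: "clopen X W \<Longrightarrow> bump X W c \<in> topspace (Cp X)"
  unfolding topspace_Cp bump_def
  by (auto intro: continuous_map_eq[of X _ "\<lambda>x. indicator W x + c"]
      continuous_map_add continuous_map_indicator_clopen)

lemma zero_in_Cp: "(\<lambda>x\<in>topspace X. 0 :: real) \<in> topspace (Cp X)"
  unfolding topspace_Cp by (auto intro: continuous_map_eq[of X _ "\<lambda>x. 0"])

text \<open>Distinct small heights \<open>tag n k \<in> (0, 1/2]\<close>, tending to \<open>0\<close> in \<open>k\<close>; they make the
  test functions pairwise distinct.\<close>

definition tag :: "nat \<Rightarrow> nat \<Rightarrow> real" where
  "tag n k = 1 / (real (prod_encode (n, k)) + 2)"

lemma tag_pos: "0 < tag n k"
  unfolding tag_def by simp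

lemma tag_le_half: "tag n k \<le> 1/2"
  unfolding tag_def by (simp add: field_simps)

lemma tag_inj: "tag n k = tag n' k' \<Longrightarrow> n = n' \<and> k = k'"
  unfolding tag_def by (simp add: field_simps)

lemma tag_finite_ge:
  assumes "0 < \<epsilon>"
  shows "finite {k. \<epsilon> \<le> tag n k}"
proof -
  have "tag n \<longlonglongrightarrow> 0"
  proof (rule Lim_null_comparison)
    show "\<forall>\<^sub>F k in sequentially. norm (tag n k) \<le> inverse (real (Suc k))"
    proof (rule always_eventually, rule allI)
      fix k
      have "real (Suc k) \<le> real (prod_encode (n, k)) + 2" using le_prod_encode_2[of k n] by simp
      then show "norm (tag n k) \<le> inverse (real (Suc k))"
        unfolding tag_def by (simp add: field_simps)
    qed
    show "(\<lambda>k. inverse (real (Suc k))) \<longlonglongrightarrow> 0" by (rule LIMSEQ_inverse_real_of_nat)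
  qed
  then have "\<forall>\<^sub>F k in sequentially. tag n k < \<epsilon>"
    using assms tag_pos by (auto dest: order_tendstoD(2))
  then show ?thesis
    by (simp add: eventually_cofinite cofinite_eq_sequentially[symmetric] not_less)
qed

lemma bump_tag_inj:
  assumes "x0 \<in> topspace X" "bump X V (tag n k) = bump X V' (tag n' k')"
  shows "n = n' \<and> k = k'"
proof (rule tag_inj)
  have "indicator V x0 + tag n k = indicator V' x0 + tag n' k'"
    using fun_cong[OF assms(2), of x0] assms(1) unfolding bump_def by simp
  then show "tag n k = tag n' k'"
    using tag_pos[of n k] tag_le_half[of n k] tag_pos[of n' k'] tag_le_half[of n' k']
    by (cases "x0 \<in> V"; cases "x0 \<in> V'") (auto simp: indicator_def)
qed

lemma bump_tag_set_converges:
  fixes W :: "nat \<Rightarrow> 'a set" and n :: nat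
  assumes W: "\<And>k. clopen X (W k)" and point_finite: "\<And>x. x \<in> topspace X \<Longrightarrow> finite {k. x \<in> W k}"
    and x0: "x0 \<in> topspace X"
  defines "f \<equiv> \<lambda>k. bump X (W k) (tag n k)"
  shows "range f \<subseteq> topspace (Cp X)" "countable (range f)" "infinite (range f)"
    and "set_converges (Cp X) (range f) (\<lambda>x\<in>topspace X. 0)"
proof -
  show "range f \<subseteq> topspace (Cp X)" unfolding f_def using bump_in_Cp[OF W] by blast
  show "countable (range f)" by simp
  have "inj f" unfolding f_def inj_def using bump_tag_inj[OF x0] by blast
  then show "infinite (range f)" by (rule range_inj_infinite)
  show "set_converges (Cp X) (range f) (\<lambda>x\<in>topspace X. 0)"
  proof (rule set_converges_CpI[OF \<open>range f \<subseteq> _\<close> \<open>countable _\<close> \<open>infinite _\<close> zero_in_Cp])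
    fix x and \<epsilon> :: real assume x: "x \<in> topspace X" and "0 < \<epsilon>"
    have "{h \<in> range f. \<epsilon> \<le> \<bar>h x - (\<lambda>x\<in>topspace X. 0) x\<bar>} \<subseteq> f ` ({k. x \<in> W k} \<union> {k. \<epsilon> \<le> tag n k})"
    proof
      fix h assume "h \<in> {h \<in> range f. \<epsilon> \<le> \<bar>h x - (\<lambda>x\<in>topspace X. 0) x\<bar>}"
      then obtain k where k: "h = f k" and dev: "\<epsilon> \<le> \<bar>f k x\<bar>" using x by auto
      have "x \<in> W k \<or> \<epsilon> \<le> tag n k"
        using dev x tag_pos[of n k] by (cases "x \<in> W k") (auto simp: f_def bump_def)
      then show "h \<in> f ` ({k. x \<in> W k} \<union> {k. \<epsilon> \<le> tag n k})" using k by blast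
    qed
    moreover have "finite ({k. x \<in> W k} \<union> {k. \<epsilon> \<le> tag n k})"
      using point_finite[OF x] tag_finite_ge[OF \<open>0 < \<epsilon>\<close>] by blast
    ultimately show "finite {h \<in> range f. \<epsilon> \<le> \<bar>h x - (\<lambda>x\<in>topspace X. 0) x\<bar>}"
      by (meson finite_imageI finite_subset)
  qed
qed

lemma cofinite_range_contains_tail:
  fixes f :: "nat \<Rightarrow> 'b"
  assumes "inj f" "finite (range f - B)"
  shows "\<exists>b. \<forall>k\<ge>b. f k \<in> B"
proof -
  obtain b where "\<forall>k\<in>f -` (range f - B). k < b"
    using finite_vimageI[OF assms(2,1)] finite_nat_set_iff_bounded by blast
  then show ?thesis by (meson not_le rangeI vimageI DiffI)
qed

text \<open>Apply \<open>\<alpha>\<^sub>1\<close> to the convergent sets of test functions built from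
  point-finite clopen sequences \<open>W n\<close>.  The cofinite subsets it provides contain all test
  functions with index \<open>k \<ge> g n\<close>; since their union still converges to \<open>0\<close>, only finitely
  many of them reach height \<open>1/2\<close> at any given point.\<close>

lemma alpha1_point_finite_clopen:
  fixes W :: "nat \<Rightarrow> nat \<Rightarrow> 'a set"
  assumes alpha1: "alpha1_space (Cp X)" and W: "\<And>n k. clopen X (W n k)"
    and point_finite: "\<And>n x. x \<in> topspace X \<Longrightarrow> finite {k. x \<in> W n k}"
  obtains g where "\<And>x. x \<in> topspace X \<Longrightarrow> finite {(n, k). g n \<le> k \<and> x \<in> W n k}"
proof (cases "topspace X = {}")
  case True
  then show ?thesis using that by blast
next
  case False
  then obtain x0 where x0: "x0 \<in> topspace X" by blast
  define f where "f n = (\<lambda>k. bump X (W n k) (tag n k))" for n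
  define zero where "zero = (\<lambda>x\<in>topspace X. 0 :: real)"
  have f_inj: "n = n' \<and> k = k'" if "f n k = f n' k'" for n k n' k'
    using bump_tag_inj[OF x0] that unfolding f_def by blast
  have "range (f n) \<subseteq> topspace (Cp X) \<and> countable (range (f n)) \<and> infinite (range (f n))
        \<and> set_converges (Cp X) (range (f n)) zero" for n
    using bump_tag_set_converges[where W="W n" and n=n, OF W point_finite x0]
    unfolding f_def zero_def by blast
  moreover have "zero \<in> topspace (Cp X)" unfolding zero_def by (rule zero_in_Cp)
  ultimately obtain B where B_sub: "\<And>n. B n \<subseteq> range (f n)"
    and B_cofinite: "\<And>n. finite (range (f n) - B n)"
    and B_converges: "set_converges (Cp X) (\<Union>n. B n) zero"
    using alpha1[unfolded alpha1_space_def, rule_format, of zero "\<lambda>n. range (f n)"] by blast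
  have "\<forall>n. \<exists>b. \<forall>k\<ge>b. f n k \<in> B n"
  proof
    fix n
    have "inj (f n)" using f_inj unfolding inj_def by blast
    then show "\<exists>b. \<forall>k\<ge>b. f n k \<in> B n" by (rule cofinite_range_contains_tail[OF _ B_cofinite])
  qed
  from choice[OF this] obtain g where g: "\<forall>n. \<forall>k\<ge>g n. f n k \<in> B n" ..
  show ?thesis
  proof (rule that)
    fix x assume x: "x \<in> topspace X"
    let ?P = "{(n, k). g n \<le> k \<and> x \<in> W n k}"
    have "(\<lambda>(n, k). f n k) ` ?P \<subseteq> {h \<in> (\<Union>n. B n). 1/2 \<le> \<bar>h x - zero x\<bar>}"
    proof
      fix h assume "h \<in> (\<lambda>(n, k). f n k) ` ?P"
      then obtain n k where nk: "g n \<le> k" "x \<in> W n k" and h: "h = f n k" by auto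
      have "h \<in> (\<Union>n. B n)" using g nk(1) h by blast
      moreover have "h x - zero x = 1 + tag n k" using x nk(2) h by (simp add: f_def bump_def zero_def)
      ultimately show "h \<in> {h \<in> (\<Union>n. B n). 1/2 \<le> \<bar>h x - zero x\<bar>}" using tag_pos[of n k] by simp
    qed
    moreover have "finite {h \<in> (\<Union>n. B n). 1/2 \<le> \<bar>h x - zero x\<bar>}"
      by (rule set_converges_Cp_finite_deviations[OF B_converges x]) simp
    moreover have "inj_on (\<lambda>(n, k). f n k) ?P" using f_inj by (auto simp: inj_on_def)
    ultimately show "finite ?P" by (meson finite_imageD finite_subset)
  qed
qed

text \<open>The implication ``\<open>\<alpha>\<^sub>1\<close> \<open>\<Rightarrow>\<close> domination'': encode each \<open>\<psi> n\<close> by a point-finite clopen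
  sequence \<open>W n\<close>; if \<open>\<psi> n x > g n\<close> then \<open>x \<in> W n k\<close> for some \<open>k \<ge> g n\<close>, which can
  happen for only finitely many \<open>n\<close>.\<close>

lemma alpha1_lsc_dominated:
  assumes alpha1: "alpha1_space (Cp X)" and clopen_unions: "countable_clopen_unions X"
  shows "lsc_dominated X"
  unfolding lsc_dominated_def
proof (intro allI impI)
  fix \<psi> :: "nat \<Rightarrow> 'a \<Rightarrow> nat" assume \<psi>: "\<forall>n. lsc_nat X (\<psi> n)"
  have "\<forall>n. \<exists>W :: nat \<Rightarrow> 'a set. (\<forall>k. clopen X (W k)) \<and> (\<forall>x\<in>topspace X. finite {k. x \<in> W k})
          \<and> (\<forall>x m. x \<in> topspace X \<longrightarrow> m < \<psi> n x \<longrightarrow> (\<exists>k\<ge>m. x \<in> W k))"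
  proof
    fix n
    obtain W :: "nat \<Rightarrow> 'a set" where "\<And>k. clopen X (W k)"
      "\<And>x. x \<in> topspace X \<Longrightarrow> finite {k. x \<in> W k}"
      "\<And>x m. x \<in> topspace X \<Longrightarrow> m < \<psi> n x \<Longrightarrow> \<exists>k\<ge>m. x \<in> W k"
      using lsc_point_finite_clopen_witness[OF clopen_unions, of "\<psi> n"] \<psi> by blast
    then show "\<exists>W :: nat \<Rightarrow> 'a set. (\<forall>k. clopen X (W k)) \<and> (\<forall>x\<in>topspace X. finite {k. x \<in> W k})
          \<and> (\<forall>x m. x \<in> topspace X \<longrightarrow> m < \<psi> n x \<longrightarrow> (\<exists>k\<ge>m. x \<in> W k))" by blast
  qed
  then obtain W :: "nat \<Rightarrow> nat \<Rightarrow> 'a set" where W: "\<And>n k. clopen X (W n k)"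
    and point_finite: "\<And>n x. x \<in> topspace X \<Longrightarrow> finite {k. x \<in> W n k}"
    and witness: "\<And>n x m. x \<in> topspace X \<Longrightarrow> m < \<psi> n x \<Longrightarrow> \<exists>k\<ge>m. x \<in> W n k"
    by metis
  obtain g where g: "\<And>x. x \<in> topspace X \<Longrightarrow> finite {(n, k). g n \<le> k \<and> x \<in> W n k}"
    using alpha1_point_finite_clopen[where W=W, OF alpha1 W point_finite] by metis
  have "\<forall>\<^sub>F n in sequentially. \<psi> n x \<le> g n" if x: "x \<in> topspace X" for x
  proof -
    let ?N = "fst ` {(n, k). g n \<le> k \<and> x \<in> W n k}"
    have "finite ?N" using g[OF x] by simp
    then have "\<forall>\<^sub>F n in sequentially. n \<notin> ?N"
      by (simp add: eventually_cofinite cofinite_eq_sequentially[symmetric])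
    then show ?thesis
    proof (rule eventually_mono)
      fix n assume n: "n \<notin> ?N"
      show "\<psi> n x \<le> g n"
      proof (rule ccontr)
        assume "\<not> \<psi> n x \<le> g n"
        then obtain k where "g n \<le> k" "x \<in> W n k" using witness[of x "g n" n] x by auto
        then have "n \<in> ?N" by force
        with n show False ..
      qed
    qed
  qed
  then show "\<exists>g. \<forall>x\<in>topspace X. \<forall>\<^sub>F n in sequentially. \<psi> n x \<le> g n" by blast
qed

section \<open>Bounded Borel images make \<open>C\<^sub>p(X)\<close> an \<open>\<alpha>\<^sub>1\<close> space\<close>

lemma sigma_algebra_borel_sets_of: "sigma_algebra (topspace X) (borel_sets_of X)"
  unfolding borel_sets_of_def by (rule sigma_algebra_sigma_sets) (auto dest: openin_subset)

lemma openin_borel_sets_of: "openin X U \<Longrightarrow> U \<in> borel_sets_of X"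
  unfolding borel_sets_of_def by (intro sigma_sets.Basic) simp

text \<open>A map into the Baire space is Borel as soon as all coordinate level sets are Borel,
  since the Baire space has a countable base of finite-dimensional cylinders.\<close>

lemma borel_funI_coordinates:
  fixes \<Psi> :: "'a \<Rightarrow> nat \<Rightarrow> nat"
  assumes coord: "\<And>n m. {x \<in> topspace X. \<Psi> x n = m} \<in> borel_sets_of X"
  shows "borel_fun X \<Psi>"
  unfolding borel_fun_def
proof (intro allI impI)
  fix U :: "(nat \<Rightarrow> nat) set" assume U: "open U"
  interpret borel: sigma_algebra "topspace X" "borel_sets_of X"
    by (rule sigma_algebra_borel_sets_of)
  have coord_in: "{x \<in> topspace X. \<Psi> x n \<in> S} \<in> borel_sets_of X" for n S
  proof -
    have "{x \<in> topspace X. \<Psi> x n \<in> S} = (\<Union>m\<in>S. {x \<in> topspace X. \<Psi> x n = m})" by blast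
    moreover have "(\<Union>m\<in>S. {x \<in> topspace X. \<Psi> x n = m}) \<in> borel_sets_of X"
      using coord by (intro borel.countable_UN) blast
    ultimately show ?thesis by simp
  qed
  obtain K :: "(nat \<Rightarrow> nat) set set" where K: "topological_basis K" "countable K"
    "\<forall>k\<in>K. \<exists>Xs. k = Pi\<^sub>E UNIV Xs \<and> (\<forall>i. open (Xs i)) \<and> finite {i. Xs i \<noteq> UNIV}"
    using product_topology_countable_basis by blast
  have "\<exists>K'. K' \<subseteq> K \<and> \<Union>K' = U"
    using conjunct2[OF K(1)[unfolded topological_basis_def], rule_format, OF U] .
  then obtain K' where K': "K' \<subseteq> K" "\<Union>K' = U" by (elim exE conjE)
  have cylinder_in: "{x \<in> topspace X. \<Psi> x \<in> k} \<in> borel_sets_of X" if "k \<in> K" for k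
  proof -
    have "\<exists>Xs. k = Pi\<^sub>E UNIV Xs \<and> (\<forall>i. open (Xs i)) \<and> finite {i. Xs i \<noteq> UNIV}"
      using K(3) that by (rule bspec)
    then obtain Xs where Xs: "k = Pi\<^sub>E UNIV Xs" "finite {i. Xs i \<noteq> UNIV}" by (elim exE conjE)
    have "{x \<in> topspace X. \<Psi> x \<in> k} =
          topspace X - (\<Union>i\<in>{i. Xs i \<noteq> UNIV}. topspace X - {x \<in> topspace X. \<Psi> x i \<in> Xs i})"
      unfolding Xs(1) by (auto simp: PiE_iff)
    moreover have "(\<Union>i\<in>{i. Xs i \<noteq> UNIV}. topspace X - {x \<in> topspace X. \<Psi> x i \<in> Xs i})
                   \<in> borel_sets_of X"
      using Xs(2) coord_in by (intro borel.finite_UN borel.Diff borel.top) auto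
    ultimately show ?thesis using borel.top borel.Diff by simp
  qed
  have "{x \<in> topspace X. \<Psi> x \<in> U} = (\<Union>k\<in>K'. {x \<in> topspace X. \<Psi> x \<in> k})" using K'(2) by blast
  moreover have "(\<Union>k\<in>K'. {x \<in> topspace X. \<Psi> x \<in> k}) \<in> borel_sets_of X"
    using K'(1) countable_subset[OF K'(1) K(2)] cylinder_in
    by (intro borel.countable_UN') auto
  ultimately show "{x \<in> topspace X. \<Psi> x \<in> U} \<in> borel_sets_of X" by simp
qed

text \<open>The entrance time \<open>\<Psi> x n\<close> from which on the open conditions \<open>P n k\<close> hold at \<open>x\<close> is a
  Borel function: \<open>{\<Psi>(\<cdot>)(n) \<le> m}\<close> is a countable intersection of open sets.\<close>

lemma borel_fun_entrance_time:
  fixes P :: "nat \<Rightarrow> nat \<Rightarrow> 'a \<Rightarrow> bool"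
  assumes open_P: "\<And>n k. openin X {x \<in> topspace X. P n k x}"
    and eventually_P: "\<And>x n. x \<in> topspace X \<Longrightarrow> \<exists>m. \<forall>k\<ge>m. P n k x"
  defines "\<Psi> \<equiv> \<lambda>x n. LEAST m. \<forall>k\<ge>m. P n k x"
  shows "borel_fun X \<Psi>"
proof (rule borel_funI_coordinates)
  interpret borel: sigma_algebra "topspace X" "borel_sets_of X"
    by (rule sigma_algebra_borel_sets_of)
  have \<Psi>_le_iff: "\<Psi> x n \<le> m \<longleftrightarrow> (\<forall>k\<ge>m. P n k x)" if "x \<in> topspace X" for x n m
  proof
    assume "\<Psi> x n \<le> m"
    moreover have "\<forall>k\<ge>\<Psi> x n. P n k x"
      unfolding \<Psi>_def using eventually_P[OF that] by (rule LeastI_ex)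
    ultimately show "\<forall>k\<ge>m. P n k x" by simp
  next
    assume "\<forall>k\<ge>m. P n k x"
    then show "\<Psi> x n \<le> m" unfolding \<Psi>_def by (rule Least_le)
  qed
  have le_in: "{x \<in> topspace X. \<Psi> x n \<le> m} \<in> borel_sets_of X" for n m
  proof -
    have "{x \<in> topspace X. \<Psi> x n \<le> m} = (\<Inter>k\<in>{m..}. {x \<in> topspace X. P n k x})"
      using \<Psi>_le_iff by auto
    moreover have "(\<Inter>k\<in>{m..}. {x \<in> topspace X. P n k x}) \<in> borel_sets_of X"
      using open_P openin_borel_sets_of by (intro borel.countable_INT) auto
    ultimately show ?thesis by simp
  qed
  show "{x \<in> topspace X. \<Psi> x n = m} \<in> borel_sets_of X" for n m
  proof (cases m)
    case 0
    then show ?thesis using le_in[of n 0] by simp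
  next
    case (Suc m')
    then have "{x \<in> topspace X. \<Psi> x n = m} =
               {x \<in> topspace X. \<Psi> x n \<le> m} - {x \<in> topspace X. \<Psi> x n \<le> m'}" by auto
    then show ?thesis using borel.Diff[OF le_in le_in] by simp
  qed
qed

definition convergence_modulus ::
  "(nat \<Rightarrow> nat \<Rightarrow> 'a \<Rightarrow> real) \<Rightarrow> ('a \<Rightarrow> real) \<Rightarrow> 'a \<Rightarrow> nat \<Rightarrow> nat" where
  "convergence_modulus e y x n = (LEAST m. \<forall>k\<ge>m. \<bar>e n k x - y x\<bar> < inverse (real (Suc n)))"

lemma convergence_modulus_exists:
  assumes "limitin (Cp X) (e n) y sequentially" "x \<in> topspace X"
  shows "\<exists>m. \<forall>k\<ge>m. \<bar>e n k x - y x\<bar> < inverse (real (Suc n))"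
proof -
  have "\<forall>\<^sub>F k in sequentially. dist (e n k x) (y x) < inverse (real (Suc n))"
    by (rule tendstoD[OF limitin_Cp_pointwise[OF assms]]) simp
  then show ?thesis unfolding eventually_sequentially dist_real_def .
qed

lemma convergence_modulus_le:
  assumes "limitin (Cp X) (e n) y sequentially" "x \<in> topspace X"
    and "convergence_modulus e y x n \<le> k"
  shows "\<bar>e n k x - y x\<bar> < inverse (real (Suc n))"
proof -
  have "\<forall>k\<ge>convergence_modulus e y x n. \<bar>e n k x - y x\<bar> < inverse (real (Suc n))"
    unfolding convergence_modulus_def
    using convergence_modulus_exists[where e=e and n=n, OF assms(1,2)] by (rule LeastI_ex)
  then show ?thesis using assms(3) by blast
qed

lemma convergence_modulus_borel:
  fixes e :: "nat \<Rightarrow> nat \<Rightarrow> 'a \<Rightarrow> real"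
  assumes e: "\<And>n k. e n k \<in> topspace (Cp X)" "\<And>n. limitin (Cp X) (e n) y sequentially"
    and y: "y \<in> topspace (Cp X)"
  shows "borel_fun X (convergence_modulus e y)"
  unfolding convergence_modulus_def[abs_def]
proof (rule borel_fun_entrance_time)
  fix n k
  have "continuous_map X euclideanreal (\<lambda>x. e n k x - y x)"
    using e(1)[of n k] y unfolding topspace_Cp by (intro continuous_map_diff) auto
  then have "openin X {x \<in> topspace X. e n k x - y x \<in> {- inverse (real (Suc n))<..<inverse (real (Suc n))}}"
    by (rule openin_continuous_map_preimage) simp
  moreover have "{x \<in> topspace X. e n k x - y x \<in> {- inverse (real (Suc n))<..<inverse (real (Suc n))}}
      = {x \<in> topspace X. \<bar>e n k x - y x\<bar> < inverse (real (Suc n))}"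
    by (auto simp: abs_less_iff)
  ultimately show "openin X {x \<in> topspace X. \<bar>e n k x - y x\<bar> < inverse (real (Suc n))}"
    by simp
next
  fix x n assume "x \<in> topspace X"
  then show "\<exists>m. \<forall>k\<ge>m. \<bar>e n k x - y x\<bar> < inverse (real (Suc n))"
    using convergence_modulus_exists[where e=e and n=n, OF e(2)] by blast
qed

lemma set_converges_Cp_Union:
  assumes A: "\<And>n. A n \<subseteq> topspace (Cp X)" "\<And>n. countable (A n)"
      "\<And>n. set_converges (Cp X) (A n) y"
    and y: "y \<in> topspace (Cp X)" and B: "\<And>n. B n \<subseteq> A n" "infinite (\<Union>n. B n)"
    and close: "\<And>x \<epsilon>. x \<in> topspace X \<Longrightarrow> 0 < \<epsilon> \<Longrightarrow>
                  \<forall>\<^sub>F n in sequentially. \<forall>h\<in>B n. \<bar>h x - y x\<bar> < \<epsilon>"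
  shows "set_converges (Cp X) (\<Union>n. B n) y"
proof (rule set_converges_CpI[OF _ _ B(2) y])
  show "(\<Union>n. B n) \<subseteq> topspace (Cp X)" using A(1) B(1) by blast
  have "countable (B n)" for n using countable_subset[OF B(1) A(2)] .
  then show "countable (\<Union>n. B n)" by (intro countable_UN) auto
  fix x and \<epsilon> :: real assume x: "x \<in> topspace X" and "0 < \<epsilon>"
  obtain N where N: "\<And>n h. N \<le> n \<Longrightarrow> h \<in> B n \<Longrightarrow> \<bar>h x - y x\<bar> < \<epsilon>"
    using close[OF x \<open>0 < \<epsilon>\<close>] unfolding eventually_sequentially by blast
  have "{h \<in> (\<Union>n. B n). \<epsilon> \<le> \<bar>h x - y x\<bar>} \<subseteq> (\<Union>n<N. {h \<in> A n. \<epsilon> \<le> \<bar>h x - y x\<bar>})"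
  proof
    fix h assume "h \<in> {h \<in> (\<Union>n. B n). \<epsilon> \<le> \<bar>h x - y x\<bar>}"
    then obtain n where n: "h \<in> B n" "\<epsilon> \<le> \<bar>h x - y x\<bar>" by blast
    then have "n < N" using N[of n h] by force
    with n B(1) show "h \<in> (\<Union>n<N. {h \<in> A n. \<epsilon> \<le> \<bar>h x - y x\<bar>})" by blast
  qed
  moreover have "finite (\<Union>n<N. {h \<in> A n. \<epsilon> \<le> \<bar>h x - y x\<bar>})"
    using set_converges_Cp_finite_deviations[OF A(3) x \<open>0 < \<epsilon>\<close>] by blast
  ultimately show "finite {h \<in> (\<Union>n. B n). \<epsilon> \<le> \<bar>h x - y x\<bar>}" by (rule finite_subset)
qed

lemma tails_set_converges:
  fixes e :: "nat \<Rightarrow> nat \<Rightarrow> 'a \<Rightarrow> real"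
  assumes e: "\<And>n. inj (e n)" "\<And>n. range (e n) \<subseteq> topspace (Cp X)"
      "\<And>n. limitin (Cp X) (e n) y sequentially"
    and y: "y \<in> topspace (Cp X)"
    and g: "\<And>x. x \<in> topspace X \<Longrightarrow> \<forall>\<^sub>F n in sequentially. convergence_modulus e y x n \<le> g n"
  shows "set_converges (Cp X) (\<Union>n. e n ` {g n..}) y"
proof (rule set_converges_Cp_Union[where A="\<lambda>n. range (e n)", OF e(2) _ _ y])
  show "set_converges (Cp X) (range (e n)) y" for n
    unfolding set_converges_def using e(1,3) by (blast intro: inj_on_imp_bij_betw)
  show "infinite (\<Union>n. e n ` {g n..})"
  proof
    assume "finite (\<Union>n. e n ` {g n..})"
    then have "finite (e 0 ` {g 0..})" by (rule finite_subset[rotated]) blast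
    moreover have "inj_on (e 0) {g 0..}" using e(1)[of 0] by (rule inj_on_subset) simp
    ultimately have "finite {g 0..}" by (rule finite_imageD)
    then show False using infinite_Ici by blast
  qed
  fix x and \<epsilon> :: real assume x: "x \<in> topspace X" and "0 < \<epsilon>"
  obtain N where N: "inverse (real (Suc N)) < \<epsilon>" using reals_Archimedean[OF \<open>0 < \<epsilon>\<close>] by blast
  have "\<forall>\<^sub>F n in sequentially. convergence_modulus e y x n \<le> g n \<and> N \<le> n"
    using g[OF x] eventually_ge_at_top[of N] by eventually_elim simp
  then show "\<forall>\<^sub>F n in sequentially. \<forall>h\<in>e n ` {g n..}. \<bar>h x - y x\<bar> < \<epsilon>"
  proof eventually_elim
    case (elim n)
    have "\<bar>e n k x - y x\<bar> < \<epsilon>" if "g n \<le> k" for k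
    proof -
      have "\<bar>e n k x - y x\<bar> < inverse (real (Suc n))"
        using convergence_modulus_le[where e=e and n=n, OF e(3) x] elim that by simp
      also have "\<dots> \<le> inverse (real (Suc N))" using elim by (simp add: le_imp_inverse_le)
      also have "\<dots> < \<epsilon>" by (rule N)
      finally show ?thesis .
    qed
    then show ?case by blast
  qed
qed (auto)

text \<open>The implication ``bounded Borel images \<open>\<Rightarrow>\<close> \<open>\<alpha>\<^sub>1\<close>'': enumerate the given sets as
  sequences \<open>e n\<close> and bound the Borel map of their convergence moduli by \<open>g\<close>; the tails
  \<open>B n = {e n k | k \<ge> g n}\<close> are cofinite and their union converges.\<close>

lemma borel_bounded_alpha1:
  assumes bounded: "\<forall>\<Psi>. borel_fun X \<Psi> \<longrightarrow> baire_bounded (\<Psi> ` topspace X)"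
  shows "alpha1_space (Cp X)"
  unfolding alpha1_space_def
proof (intro ballI allI impI)
  fix y and A :: "nat \<Rightarrow> ('a \<Rightarrow> real) set"
  assume y: "y \<in> topspace (Cp X)" and A: "\<forall>n. A n \<subseteq> topspace (Cp X) \<and> countable (A n)
    \<and> infinite (A n) \<and> set_converges (Cp X) (A n) y"
  have "\<forall>n. \<exists>e. bij_betw e UNIV (A n) \<and> limitin (Cp X) e y sequentially"
    using A unfolding set_converges_def by blast
  from choice[OF this] obtain e :: "nat \<Rightarrow> nat \<Rightarrow> 'a \<Rightarrow> real"
    where e: "\<forall>n. bij_betw (e n) UNIV (A n) \<and> limitin (Cp X) (e n) y sequentially" ..
  have e_range: "range (e n) = A n" and e_inj: "inj (e n)"
    and e_lim: "limitin (Cp X) (e n) y sequentially" for n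
    using e unfolding bij_betw_def by blast+
  have "e n k \<in> topspace (Cp X)" for n k using A e_range by blast
  then have "borel_fun X (convergence_modulus e y)"
    using e_lim y by (rule convergence_modulus_borel)
  then obtain g where g: "\<And>x. x \<in> topspace X \<Longrightarrow> \<forall>\<^sub>F n in sequentially. convergence_modulus e y x n \<le> g n"
    using bounded unfolding baire_bounded_def by blast
  define B where "B n = e n ` {g n..}" for n
  have "B n \<subseteq> A n" for n unfolding B_def using e_range by blast
  moreover have "finite (A n - B n)" for n
  proof (rule finite_subset)
    show "A n - B n \<subseteq> e n ` {..<g n}"
    proof
      fix h assume "h \<in> A n - B n"
      then obtain k where "h = e n k" "k \<notin> {g n..}" unfolding B_def e_range[symmetric] by blast
      then show "h \<in> e n ` {..<g n}" by simp
    qed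
  qed simp
  moreover have "set_converges (Cp X) (\<Union>n. B n) y"
    unfolding B_def using A e_range e_inj e_lim y g by (intro tails_set_converges) auto
  ultimately show "\<exists>B. (\<forall>n. B n \<subseteq> A n \<and> finite (A n - B n)) \<and> set_converges (Cp X) (\<Union>n. B n) y"
    by blast
qed

theorem mainTheorem4:
  fixes X :: "'a topology"
  assumes "\<forall>U. openin X U \<longrightarrow>
             (\<exists>\<C>. countable \<C> \<and> (\<forall>C\<in>\<C>. closedin X C \<and> openin X C) \<and> \<Union>\<C> = U)"
  shows "alpha1_space (Cp X) \<longleftrightarrow>
           (\<forall>\<Psi>. borel_fun X \<Psi> \<longrightarrow> baire_bounded (\<Psi> ` topspace X))"
proof -
  have clopen_unions: "countable_clopen_unions X"
    using assms unfolding countable_clopen_unions_def .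
  show ?thesis
  proof
    assume "alpha1_space (Cp X)"
    then have "lsc_dominated X" using alpha1_lsc_dominated clopen_unions by blast
    then show "\<forall>\<Psi>. borel_fun X \<Psi> \<longrightarrow> baire_bounded (\<Psi> ` topspace X)"
      using lsc_dominated_borel_bounded clopen_unions by blast
  next
    assume "\<forall>\<Psi>. borel_fun X \<Psi> \<longrightarrow> baire_bounded (\<Psi> ` topspace X)"
    then show "alpha1_space (Cp X)" by (rule borel_bounded_alpha1)
  qed
qed

end
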